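(* Let $V$ be the space of real symmetric $d\times d$ matrices, and let $\mathfrak{S}_d$ act on $V$ by simultaneous permutation of rows and columns, $X\mapsto PXP^\top$ for permutation matrices $P$. If $d\ge 2m$, then $\dim(\mathbb{R}[V]_m^{\mathfrak{S}_d})$ is independent of $d$ and satisfies $$\dim\big(\mathbb{R}[V]_m^{\mathfrak{S}_d}\big)\le\sum_{j=0}^m\sum_{\alpha\vdash 2j}q_\alpha.$$
   Context: $\mathbb{R}[V]_m$ denotes the real polynomials on $V$ of total degree at most $m$, and $\mathbb{R}[V]_m^{G}$ the subspace of $G$-invariant ones. $\alpha\vdash 2j$ means $\alpha$ is a partition of $2j$ (non-increasing sequence of positive integers summing to $2j$). For a partition $\alpha$ with $\ell$ parts, $q_\alpha$ is the number of symmetric $\ell\times\ell$ matrices with nonnegative integer entries whose vector of row sums equals $\alpha$. *)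

theory Defs
  imports "HOL-Analysis.Analysis" "HOL-Library.Function_Algebras"
begin

text \<open>Real d x d matrices are encoded as functions nat => nat => real; the space V of
  real symmetric d x d matrices is the set of symmetric such functions vanishing outside
  the index range {0..<d} x {0..<d}.\<close>

type_synonym mat = "nat \<Rightarrow> nat \<Rightarrow> real"

definition sym_mats :: "nat \<Rightarrow> mat set" where
  "sym_mats d = {X. (\<forall>i j. X i j = X j i) \<and> (\<forall>i j. d \<le> i \<or> d \<le> j \<longrightarrow> X i j = 0)}"

definition fscale :: "real \<Rightarrow> (mat \<Rightarrow> real) \<Rightarrow> (mat \<Rightarrow> real)" where
  "fscale c f = (\<lambda>X. c * f X)"

text \<open>Monomial functions on V of total degree at most m in the matrix entries
  (extended by 0 outside V, so that they are genuinely functions on V).\<close>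

definition monomial_fn :: "nat \<Rightarrow> (nat \<times> nat \<Rightarrow> nat) \<Rightarrow> mat \<Rightarrow> real" where
  "monomial_fn d e = (\<lambda>X. if X \<in> sym_mats d
      then (\<Prod>p\<in>{..<d} \<times> {..<d}. X (fst p) (snd p) ^ e p) else 0)"

definition monomials_upto :: "nat \<Rightarrow> nat \<Rightarrow> (mat \<Rightarrow> real) set" where
  "monomials_upto d m = {monomial_fn d e | e.
      (\<forall>p. p \<notin> {..<d} \<times> {..<d} \<longrightarrow> e p = 0) \<and> (\<Sum>p\<in>{..<d} \<times> {..<d}. e p) \<le> m}"

definition poly_upto :: "nat \<Rightarrow> nat \<Rightarrow> (mat \<Rightarrow> real) set" where
  "poly_upto d m = module.span fscale (monomials_upto d m)"

text \<open>Action of a permutation sigma of {0..<d}: X |-> P X P^T, i.e. entries X (sigma i) (sigma j).\<close>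

definition perm_act :: "(nat \<Rightarrow> nat) \<Rightarrow> mat \<Rightarrow> mat" where
  "perm_act \<sigma> X = (\<lambda>i j. X (\<sigma> i) (\<sigma> j))"

definition inv_poly_upto :: "nat \<Rightarrow> nat \<Rightarrow> (mat \<Rightarrow> real) set" where
  "inv_poly_upto d m = {p \<in> poly_upto d m.
      \<forall>\<sigma>. \<sigma> permutes {..<d} \<longrightarrow> (\<forall>X \<in> sym_mats d. p (perm_act \<sigma> X) = p X)}"

definition inv_dim :: "nat \<Rightarrow> nat \<Rightarrow> nat" where
  "inv_dim d m = vector_space.dim fscale (inv_poly_upto d m)"

definition partitions_of :: "nat \<Rightarrow> nat list set" where
  "partitions_of n = {\<alpha>. sorted_wrt (\<ge>) \<alpha> \<and> (\<forall>x\<in>set \<alpha>. 0 < x) \<and> sum_list \<alpha> = n}"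

definition q_count :: "nat list \<Rightarrow> nat" where
  "q_count \<alpha> = card {M :: nat \<Rightarrow> nat \<Rightarrow> nat.
      (\<forall>i j. M i j = M j i) \<and>
      (\<forall>i j. length \<alpha> \<le> i \<or> length \<alpha> \<le> j \<longrightarrow> M i j = 0) \<and>
      (\<forall>i < length \<alpha>. (\<Sum>j<length \<alpha>. M i j) = \<alpha> ! i)}"

end

theory Submission
  imports Defs
begin

text \<open>Write \<open>V_d\<close> for the symmetric \<open>d \<times> d\<close> matrices. Restriction \<open>R\<close> to the top-left
  block maps invariants of degree \<open>\<le> m\<close> on \<open>V_(d+1)\<close> to invariants on \<open>V_d\<close>; conversely
  \<open>E q (X) = \<Sum>\<^sub>v q (X with v swapped to the last position, then truncated)\<close> maps invariants
  on \<open>V_d\<close> to invariants on \<open>V_(d+1)\<close>. The operator \<open>A q (X) = \<Sum>\<^sub>v q (X with row and column v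
  deleted)\<close> on \<open>V_n\<close> is diagonal on monomials, with eigenvalue \<open>n - s\<close> for a monomial
  involving \<open>s \<le> min n (2m)\<close> indices. If \<open>R p = 0\<close> for an invariant \<open>p\<close>, invariance forces
  \<open>A p = 0\<close>, impossible for \<open>p \<noteq> 0\<close> when \<open>d \<ge> 2m\<close>; and \<open>R (E q) = q + A q\<close>, where \<open>A\<close> has
  no negative eigenvalue. So \<open>R\<close> and \<open>E\<close> are injective on invariants and the dimension is
  constant for \<open>d \<ge> 2m\<close>. For the bound, the invariants are spanned by the orbit sums of
  monomials, and every orbit contains the monomial of a multigraph with loops whose sorted vertex
  degrees form a partition of \<open>2j\<close>, \<open>j \<le> m\<close>; its adjacency matrix is one of those counted by
  \<open>q_count\<close>.\<close>

context vector_space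
begin

lemma eigenvector_in_span:
  assumes f: "module_hom scale scale f" and B: "\<And>b. b \<in> B \<Longrightarrow> f b = scale k b"
    and x: "x \<in> span B"
  shows "f x = scale k x"
proof -
  interpret f: module_hom scale scale f by (fact f)
  have "subspace {x. f x = scale k x}"
    unfolding subspace_def by (auto simp: f.add f.scale scale_right_distrib)
  moreover have "B \<subseteq> {x. f x = scale k x}" using B by blast
  ultimately have "span B \<subseteq> {x. f x = scale k x}" by (simp add: span_minimal)
  with x show ?thesis by blast
qed

lemma image_span_subset:
  assumes f: "module_hom scale scale f" and fB: "f ` B \<subseteq> span C" and x: "x \<in> span B"
  shows "f x \<in> span C"
proof -
  interpret f: module_hom scale scale f by (fact f)
  have "f x \<in> span (f ` B)" using f.span_image x by blast
  then show ?thesis using span_mono[OF fB] span_span by blast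
qed

lemma eigenvector_eq_0_if_eigenvalue_notin:
  assumes f: "module_hom scale scale f" and K: "finite K"
    and B: "\<forall>b\<in>B. \<exists>k\<in>K. f b = scale k b"
    and x: "x \<in> span B" and fx: "f x = scale c x" and c: "c \<notin> K"
  shows "x = 0"
  using K B x fx c
proof (induction K arbitrary: B x rule: finite_induct)
  case empty
  then show ?case by simp
next
  case (insert k K B x)
  interpret f: module_hom scale scale f by (fact f)
  define B' where "B' = {b\<in>B. f b \<noteq> scale k b}"
  have B'_eigen: "\<forall>b\<in>B'. \<exists>k'\<in>K. f b = scale k' b"
    using insert.prems(1) by (force simp: B'_def)
  have "B = {b\<in>B. f b = scale k b} \<union> B'" by (auto simp: B'_def)
  then have "x \<in> span ({b\<in>B. f b = scale k b} \<union> B')" using insert.prems(2) by simp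
  then obtain a b where a: "a \<in> span {b\<in>B. f b = scale k b}" and b: "b \<in> span B'"
      and x: "x = a + b"
    unfolding span_Un by blast
  have fa: "f a = scale k a" using eigenvector_in_span[OF f _ a] by blast
  have "f ` B' \<subseteq> span B'"
  proof (rule image_subsetI)
    fix b assume "b \<in> B'"
    then obtain k' where "f b = scale k' b" using B'_eigen by blast
    then show "f b \<in> span B'" using \<open>b \<in> B'\<close> by (simp add: span_base span_scale)
  qed
  then have "f b \<in> span B'" using image_span_subset[OF f _ b] by blast
  \<comment> \<open>the component of \<open>x\<close> in the \<open>k\<close>-eigenspace is killed by \<open>f - k\<close>\<close>
  moreover have "scale (c - k) x = f b - scale k b"
    using insert.prems(3) fa
    by (simp add: x f.add scale_left_diff_distrib scale_right_distrib algebra_simps)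
  ultimately have "scale (c - k) x \<in> span B'"
    using b by (metis span_diff span_scale)
  moreover have "f (scale (c - k) x) = scale c (scale (c - k) x)"
    using insert.prems(3) by (simp add: f.scale scale_left_commute)
  ultimately have "scale (c - k) x = 0"
    using insert.IH[OF B'_eigen] insert.prems(4) by blast
  then show ?case using insert.prems(4) by simp
qed

lemma dim_le_dim_if_inj_on:
  assumes f: "module_hom scale scale f" and S: "subspace S" and inj: "inj_on f S"
    and fS: "f ` S \<subseteq> T" and T: "T \<subseteq> span W" and W: "finite W"
  shows "dim S \<le> dim T"
proof -
  interpret f: module_hom scale scale f by (fact f)
  obtain B where B: "B \<subseteq> S" "independent B" "S \<subseteq> span B" "card B = dim S"
    by (rule basis_exists)
  obtain C where C: "C \<subseteq> T" "independent C" "T \<subseteq> span C" "card C = dim T"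
    by (rule basis_exists)
  have "inj_on f (span B)" using inj_on_subset[OF inj span_minimal[OF B(1) S]] .
  then have "independent (f ` B)" using f.dependent_inj_imageD B(2) by blast
  moreover have "finite C" using independent_span_bound[OF W C(2)] C(1) T by blast
  moreover have "f ` B \<subseteq> span C" using B(1) fS C(3) by blast
  ultimately have "card (f ` B) \<le> card C" using independent_span_bound by blast
  moreover have "card (f ` B) = card B" using card_image inj_on_subset[OF inj B(1)] by blast
  ultimately show ?thesis using B(4) C(4) by simp
qed

end

interpretation fs: vector_space fscale
  by unfold_locales (auto simp: fscale_def fun_eq_iff algebra_simps)

lemma fscale_apply: "fscale c f X = c * f X"
  by (simp add: fscale_def)

lemma sum_fun_apply: "(sum f A) x = (\<Sum>a\<in>A. f a x)"
  by (induction A rule: infinite_finite_induct) auto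

lemma module_hom_fscaleI:
  assumes "\<And>f g. L (f + g) = L f + L g" and "\<And>c f. L (fscale c f) = fscale c (L f)"
  shows "module_hom fscale fscale L"
  using assms fs.module_axioms by (simp add: module_hom_iff)

lemma prod_square_permute:
  fixes F :: "nat \<times> nat \<Rightarrow> 'a :: comm_monoid_mult"
  assumes "\<pi> permutes {..<n}"
  shows "(\<Prod>p\<in>{..<n} \<times> {..<n}. F (\<pi> (fst p), \<pi> (snd p))) = (\<Prod>p\<in>{..<n} \<times> {..<n}. F p)"
  using prod.reindex_bij_betw[OF bij_betw_map_prod[OF permutes_imp_bij[OF assms] permutes_imp_bij[OF assms]], of F]
  by (simp add: map_prod_def split_def)

lemma sum_square_permute:
  fixes F :: "nat \<times> nat \<Rightarrow> 'a :: comm_monoid_add"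
  assumes "\<pi> permutes {..<n}"
  shows "(\<Sum>p\<in>{..<n} \<times> {..<n}. F (\<pi> (fst p), \<pi> (snd p))) = (\<Sum>p\<in>{..<n} \<times> {..<n}. F p)"
  using sum.reindex_bij_betw[OF bij_betw_map_prod[OF permutes_imp_bij[OF assms] permutes_imp_bij[OF assms]], of F]
  by (simp add: map_prod_def split_def)

lemma perm_act_in_sym_mats: "\<sigma> permutes {..<n} \<Longrightarrow> X \<in> sym_mats n \<Longrightarrow> perm_act \<sigma> X \<in> sym_mats n"
  unfolding sym_mats_def perm_act_def by (auto simp: permutes_not_in)

lemma perm_act_comp: "perm_act (f \<circ> g) X = perm_act g (perm_act f X)"
  by (simp add: perm_act_def)

lemma perm_act_symmetric: "X \<in> sym_mats n \<Longrightarrow> perm_act \<sigma> X i j = perm_act \<sigma> X j i"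
  by (simp add: perm_act_def sym_mats_def)

lemma sym_mats_mono: "d \<le> n \<Longrightarrow> sym_mats d \<subseteq> sym_mats n"
  by (auto simp: sym_mats_def)

lemma span_monomials_vanish:
  assumes "p \<in> fs.span (monomials_upto n m)" "X \<notin> sym_mats n"
  shows "p X = 0"
  using assms(1)
proof (induction rule: fs.span_induct_alt)
  case (step c x y)
  then have "x X = 0" using assms(2) by (auto simp: monomials_upto_def monomial_fn_def)
  then show ?case using step by (simp add: fscale_apply)
qed simp

lemma finite_monomials_upto: "finite (monomials_upto n m)"
proof -
  let ?E = "{e :: nat \<times> nat \<Rightarrow> nat. (\<forall>p. p \<notin> {..<n} \<times> {..<n} \<longrightarrow> e p = 0)
    \<and> (\<Sum>p\<in>{..<n} \<times> {..<n}. e p) \<le> m}"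
  have "?E \<subseteq> {e. \<forall>x. (x \<in> {..<n} \<times> {..<n} \<longrightarrow> e x \<in> {..m}) \<and> (x \<notin> {..<n} \<times> {..<n} \<longrightarrow> e x = 0)}"
  proof (intro subsetI CollectI allI conjI impI)
    fix e x assume e: "e \<in> ?E" and x: "x \<in> {..<n} \<times> {..<n}"
    then have "e x \<le> (\<Sum>p\<in>{..<n} \<times> {..<n}. e p)" by (intro member_le_sum) auto
    then show "e x \<in> {..m}" using e by auto
  next
    fix e x assume "e \<in> ?E" "x \<notin> {..<n} \<times> {..<n}"
    then show "e x = 0" by blast
  qed
  moreover have "finite {e :: nat \<times> nat \<Rightarrow> nat. \<forall>x. (x \<in> {..<n} \<times> {..<n} \<longrightarrow> e x \<in> {..m})
      \<and> (x \<notin> {..<n} \<times> {..<n} \<longrightarrow> e x = 0)}"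
    by (intro finite_set_of_finite_funs) auto
  ultimately have "finite ?E" by (rule finite_subset)
  moreover have "monomials_upto n m = monomial_fn n ` ?E"
    by (auto simp: monomials_upto_def)
  ultimately show ?thesis by simp
qed

lemma inv_poly_upto_subset_span: "inv_poly_upto n m \<subseteq> fs.span (monomials_upto n m)"
  by (auto simp: inv_poly_upto_def poly_upto_def)

lemma subspace_inv_poly_upto: "fs.subspace (inv_poly_upto n m)"
  unfolding fs.subspace_def inv_poly_upto_def poly_upto_def
  by (auto simp: fs.span_zero fs.span_add fs.span_scale fscale_apply)

lemma inv_poly_uptoI:
  assumes "p \<in> fs.span (monomials_upto n m)"
    and "\<And>\<sigma> X. \<sigma> permutes {..<n} \<Longrightarrow> X \<in> sym_mats n \<Longrightarrow> p (perm_act \<sigma> X) = p X"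
  shows "p \<in> inv_poly_upto n m"
  using assms by (auto simp: inv_poly_upto_def poly_upto_def)

lemma inv_poly_upto_invariant:
  "p \<in> inv_poly_upto n m \<Longrightarrow> \<sigma> permutes {..<n} \<Longrightarrow> X \<in> sym_mats n \<Longrightarrow> p (perm_act \<sigma> X) = p X"
  by (auto simp: inv_poly_upto_def)

definition del_rowcol :: "nat \<Rightarrow> mat \<Rightarrow> mat" where
  "del_rowcol v X = (\<lambda>i j. if i = v \<or> j = v then 0 else X i j)"

definition deletion_sum :: "nat \<Rightarrow> (mat \<Rightarrow> real) \<Rightarrow> (mat \<Rightarrow> real)" where
  "deletion_sum n f = (\<lambda>X. if X \<in> sym_mats n then (\<Sum>v<n. f (del_rowcol v X)) else 0)"

definition touched_indices :: "nat \<Rightarrow> (nat \<times> nat \<Rightarrow> nat) \<Rightarrow> nat set" where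
  "touched_indices n e = {v. v < n \<and> (\<exists>w<n. e (v,w) \<noteq> 0 \<or> e (w,v) \<noteq> 0)}"

lemma del_rowcol_in_sym_mats: "X \<in> sym_mats n \<Longrightarrow> del_rowcol v X \<in> sym_mats n"
  by (auto simp: sym_mats_def del_rowcol_def)

lemma module_hom_deletion_sum: "module_hom fscale fscale (deletion_sum n)"
  by (rule module_hom_fscaleI)
    (auto simp: deletion_sum_def fscale_def fun_eq_iff sum.distrib sum_distrib_left)

lemma monomial_fn_del_rowcol:
  assumes X: "X \<in> sym_mats n" and v: "v < n"
  shows "monomial_fn n e (del_rowcol v X) = (if v \<in> touched_indices n e then 0 else monomial_fn n e X)"
proof (cases "v \<in> touched_indices n e")
  case True
  then obtain w where w: "w < n" "e (v,w) \<noteq> 0 \<or> e (w,v) \<noteq> 0"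
    by (auto simp: touched_indices_def)
  then have "(v,w) \<in> {..<n} \<times> {..<n} \<and> del_rowcol v X v w ^ e (v,w) = 0
      \<or> (w,v) \<in> {..<n} \<times> {..<n} \<and> del_rowcol v X w v ^ e (w,v) = 0"
    using v by (auto simp: del_rowcol_def)
  then have "\<exists>p\<in>{..<n} \<times> {..<n}. del_rowcol v X (fst p) (snd p) ^ e p = 0"
    by force
  then have "(\<Prod>p\<in>{..<n} \<times> {..<n}. del_rowcol v X (fst p) (snd p) ^ e p) = 0"
    by (simp add: prod_zero)
  then show ?thesis using True del_rowcol_in_sym_mats[OF X] by (simp add: monomial_fn_def)
next
  case False
  have "(\<Prod>p\<in>{..<n} \<times> {..<n}. del_rowcol v X (fst p) (snd p) ^ e p)
      = (\<Prod>p\<in>{..<n} \<times> {..<n}. X (fst p) (snd p) ^ e p)"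
  proof (rule prod.cong)
    fix p assume p: "p \<in> {..<n} \<times> {..<n}"
    show "del_rowcol v X (fst p) (snd p) ^ e p = X (fst p) (snd p) ^ e p"
    proof (cases "e p = 0")
      case False
      then have "fst p \<noteq> v \<and> snd p \<noteq> v"
        using p \<open>v \<notin> touched_indices n e\<close> by (cases p) (auto simp: touched_indices_def)
      then show ?thesis by (simp add: del_rowcol_def)
    qed simp
  qed simp
  then show ?thesis using False del_rowcol_in_sym_mats[OF X] X by (simp add: monomial_fn_def)
qed

lemma deletion_sum_monomial:
  "deletion_sum n (monomial_fn n e) = fscale (real n - real (card (touched_indices n e))) (monomial_fn n e)"
proof (rule ext)
  fix X
  have sub: "touched_indices n e \<subseteq> {..<n}" by (auto simp: touched_indices_def)
  show "deletion_sum n (monomial_fn n e) X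
      = fscale (real n - real (card (touched_indices n e))) (monomial_fn n e) X"
  proof (cases "X \<in> sym_mats n")
    case True
    have "(\<Sum>v<n. monomial_fn n e (del_rowcol v X))
        = (\<Sum>v<n. if v \<in> touched_indices n e then 0 else monomial_fn n e X)"
      using True by (intro sum.cong) (auto simp: monomial_fn_del_rowcol)
    also have "\<dots> = (\<Sum>v\<in>{..<n} - touched_indices n e. monomial_fn n e X)"
      by (subst sum.If_cases) (auto simp: Diff_eq)
    also have "\<dots> = (real n - real (card (touched_indices n e))) * monomial_fn n e X"
      using sub card_mono[OF _ sub] by (simp add: card_Diff_subset finite_subset of_nat_diff)
    finally show ?thesis using True by (simp add: deletion_sum_def fscale_apply)
  qed (simp add: deletion_sum_def fscale_apply monomial_fn_def)
qed

lemma card_touched_indices_le: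
  assumes "(\<Sum>p\<in>{..<n} \<times> {..<n}. e p) \<le> m"
  shows "card (touched_indices n e) \<le> 2 * m"
proof -
  define S where "S = {p \<in> {..<n} \<times> {..<n}. e p \<noteq> 0}"
  have fS: "finite S" by (auto simp: S_def)
  have "touched_indices n e \<subseteq> fst ` S \<union> snd ` S"
  proof
    fix v assume "v \<in> touched_indices n e"
    then obtain w where "v < n" "w < n" "e (v,w) \<noteq> 0 \<or> e (w,v) \<noteq> 0"
      by (auto simp: touched_indices_def)
    then have "(v,w) \<in> S \<or> (w,v) \<in> S" by (auto simp: S_def)
    then show "v \<in> fst ` S \<union> snd ` S" by force
  qed
  then have "card (touched_indices n e) \<le> card (fst ` S \<union> snd ` S)"
    using fS by (intro card_mono) auto
  also have "\<dots> \<le> card S + card S"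
    using fS card_Un_le[of "fst ` S" "snd ` S"] card_image_le[of S fst] card_image_le[of S snd]
    by linarith
  also have "card S \<le> m"
  proof -
    have "card S = (\<Sum>p\<in>S. 1)" by simp
    also have "\<dots> \<le> (\<Sum>p\<in>S. e p)" by (intro sum_mono) (auto simp: S_def)
    also have "\<dots> \<le> (\<Sum>p\<in>{..<n} \<times> {..<n}. e p)" by (intro sum_mono2) (auto simp: S_def)
    finally show ?thesis using assms by simp
  qed
  finally show ?thesis by simp
qed

text \<open>On polynomials of degree \<open>\<le> m\<close> the eigenvalues of \<^const>\<open>deletion_sum\<close> are among the
  numbers \<open>n - s\<close> with \<open>s \<le> min n (2m)\<close>.\<close>

lemma deletion_sum_eigenvector_eq_0:
  assumes p: "p \<in> fs.span (monomials_upto n m)" and Ap: "deletion_sum n p = fscale c p"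
    and c: "\<And>s. s \<le> min n (2 * m) \<Longrightarrow> c \<noteq> real n - real s"
  shows "p = 0"
proof (rule fs.eigenvector_eq_0_if_eigenvalue_notin[OF module_hom_deletion_sum _ _ p Ap])
  let ?K = "(\<lambda>s. real n - real s) ` {..min n (2 * m)}"
  show "finite ?K" by simp
  show "c \<notin> ?K"
  proof
    assume "c \<in> ?K"
    then obtain s where "s \<le> min n (2 * m)" "c = real n - real s" by auto
    then show False using c by blast
  qed
  show "\<forall>b\<in>monomials_upto n m. \<exists>k\<in>?K. deletion_sum n b = fscale k b"
  proof
    fix b assume "b \<in> monomials_upto n m"
    then obtain e where b: "b = monomial_fn n e" and e: "(\<Sum>p\<in>{..<n} \<times> {..<n}. e p) \<le> m"
      unfolding monomials_upto_def by blast
    have "card (touched_indices n e) \<le> card {..<n}"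
      by (rule card_mono) (auto simp: touched_indices_def)
    then have "card (touched_indices n e) \<in> {..min n (2 * m)}"
      using card_touched_indices_le[OF e] by simp
    then show "\<exists>k\<in>?K. deletion_sum n b = fscale k b"
      unfolding b deletion_sum_monomial by blast
  qed
qed

definition restrict_fun :: "nat \<Rightarrow> (mat \<Rightarrow> real) \<Rightarrow> (mat \<Rightarrow> real)" where
  "restrict_fun d f = (\<lambda>X. if X \<in> sym_mats d then f X else 0)"

lemma module_hom_restrict_fun: "module_hom fscale fscale (restrict_fun d)"
  by (rule module_hom_fscaleI) (auto simp: restrict_fun_def fun_eq_iff fscale_def)

lemma restrict_fun_monomial:
  assumes e0: "\<forall>p. p \<notin> {..<Suc d} \<times> {..<Suc d} \<longrightarrow> e p = 0"
    and es: "(\<Sum>p\<in>{..<Suc d} \<times> {..<Suc d}. e p) \<le> m"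
  shows "restrict_fun d (monomial_fn (Suc d) e) \<in> fs.span (monomials_upto d m)"
proof (cases "\<forall>p. p \<notin> {..<d} \<times> {..<d} \<longrightarrow> e p = 0")
  case True
  have sub: "{..<d} \<times> {..<d} \<subseteq> {..<Suc d} \<times> {..<Suc d}" by auto
  have z: "\<forall>p\<in>{..<Suc d} \<times> {..<Suc d} - {..<d} \<times> {..<d}. e p = 0" using True by (meson DiffD2)
  have "(\<Sum>p\<in>{..<Suc d} \<times> {..<Suc d}. e p) = (\<Sum>p\<in>{..<d} \<times> {..<d}. e p)"
    by (rule sum.mono_neutral_right[OF _ sub z]) simp
  then have "monomial_fn d e \<in> monomials_upto d m"
    using True es unfolding monomials_upto_def by auto
  moreover have "restrict_fun d (monomial_fn (Suc d) e) = monomial_fn d e"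
  proof (rule ext)
    fix X
    show "restrict_fun d (monomial_fn (Suc d) e) X = monomial_fn d e X"
    proof (cases "X \<in> sym_mats d")
      case True
      then have "X \<in> sym_mats (Suc d)" using sym_mats_mono[of d "Suc d"] by auto
      moreover have "(\<Prod>p\<in>{..<Suc d} \<times> {..<Suc d}. X (fst p) (snd p) ^ e p) =
          (\<Prod>p\<in>{..<d} \<times> {..<d}. X (fst p) (snd p) ^ e p)"
        using z by (intro prod.mono_neutral_right[OF _ sub]) auto
      ultimately show ?thesis using True by (simp add: restrict_fun_def monomial_fn_def)
    qed (simp add: restrict_fun_def monomial_fn_def)
  qed
  ultimately show ?thesis by (simp add: fs.span_base)
next
  case False
  then obtain p where p: "p \<notin> {..<d} \<times> {..<d}" "e p \<noteq> 0" by auto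
  then have pin: "p \<in> {..<Suc d} \<times> {..<Suc d}" using e0 by metis
  have "restrict_fun d (monomial_fn (Suc d) e) = 0"
  proof (rule ext)
    fix X
    show "restrict_fun d (monomial_fn (Suc d) e) X = 0 X"
    proof (cases "X \<in> sym_mats d")
      case True
      have x0: "X (fst p) (snd p) ^ e p = 0"
        using True p by (cases p) (auto simp: sym_mats_def)
      have "(\<Prod>p\<in>{..<Suc d} \<times> {..<Suc d}. X (fst p) (snd p) ^ e p) = 0"
        by (rule prod_zero) (simp, use pin x0 in blast)
      then show ?thesis using True by (simp add: restrict_fun_def monomial_fn_def)
    qed (simp add: restrict_fun_def)
  qed
  then show ?thesis by (metis fs.span_zero)
qed

lemma restrict_fun_in_inv_poly_upto:
  assumes p: "p \<in> inv_poly_upto (Suc d) m"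
  shows "restrict_fun d p \<in> inv_poly_upto d m"
proof (rule inv_poly_uptoI)
  have "restrict_fun d ` monomials_upto (Suc d) m \<subseteq> fs.span (monomials_upto d m)"
    using restrict_fun_monomial unfolding monomials_upto_def by blast
  then show "restrict_fun d p \<in> fs.span (monomials_upto d m)"
    using fs.image_span_subset[OF module_hom_restrict_fun] p inv_poly_upto_subset_span by blast
next
  fix \<sigma> X assume \<sigma>: "\<sigma> permutes {..<d}" and X: "X \<in> sym_mats d"
  have "\<sigma> permutes {..<Suc d}" using \<sigma> by (rule permutes_subset) auto
  moreover have "X \<in> sym_mats (Suc d)" using X sym_mats_mono[of d "Suc d"] by auto
  ultimately have "p (perm_act \<sigma> X) = p X" using inv_poly_upto_invariant[OF p] by blast
  then show "restrict_fun d p (perm_act \<sigma> X) = restrict_fun d p X"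
    using perm_act_in_sym_mats[OF \<sigma> X] X by (simp add: restrict_fun_def)
qed

lemma swap_del_rowcol_in_sym_mats:
  assumes X: "X \<in> sym_mats (Suc d)" and v: "v < Suc d"
  shows "perm_act (Transposition.transpose v d) (del_rowcol v X) \<in> sym_mats d"
  unfolding sym_mats_def
proof (intro CollectI conjI allI impI)
  let ?t = "Transposition.transpose v d"
  fix i j
  show "perm_act ?t (del_rowcol v X) i j = perm_act ?t (del_rowcol v X) j i"
    using X unfolding sym_mats_def perm_act_def del_rowcol_def by auto
  assume "d \<le> i \<or> d \<le> j"
  \<comment> \<open>an index \<open>\<ge> d\<close> is sent by the swap either to \<open>v\<close>, whose row and column are deleted,
    or outside the support of \<open>X\<close>\<close>
  moreover have "?t k = v \<or> Suc d \<le> ?t k" if "d \<le> k" for k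
    using that v by (cases "k = d") (auto simp: transpose_def)
  ultimately have "?t i = v \<or> Suc d \<le> ?t i \<or> ?t j = v \<or> Suc d \<le> ?t j"
    by blast
  then show "perm_act ?t (del_rowcol v X) i j = 0"
    using X unfolding sym_mats_def perm_act_def del_rowcol_def by auto
qed

lemma restrict_fun_eq_0_imp:
  assumes dm: "2 * m \<le> d" and p: "p \<in> inv_poly_upto (Suc d) m"
    and R: "restrict_fun d p = 0"
  shows "p = 0"
proof (rule deletion_sum_eigenvector_eq_0)
  show "p \<in> fs.span (monomials_upto (Suc d) m)" using p inv_poly_upto_subset_span by blast
  show "deletion_sum (Suc d) p = fscale 0 p"
  proof (rule ext)
    fix X
    have "p (del_rowcol v X) = 0" if X: "X \<in> sym_mats (Suc d)" and v: "v < Suc d" for v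
    proof -
      let ?t = "Transposition.transpose v d"
      have "?t permutes {..<Suc d}" using v by (intro permutes_swap_id) auto
      then have "p (del_rowcol v X) = p (perm_act ?t (del_rowcol v X))"
        using inv_poly_upto_invariant[OF p] del_rowcol_in_sym_mats[OF X] by simp
      also have "\<dots> = restrict_fun d p (perm_act ?t (del_rowcol v X))"
        using swap_del_rowcol_in_sym_mats[OF X v] by (simp add: restrict_fun_def)
      finally show ?thesis using R by simp
    qed
    then show "deletion_sum (Suc d) p X = fscale 0 p X"
      by (simp add: deletion_sum_def fscale_apply)
  qed
  show "\<And>s. s \<le> min (Suc d) (2 * m) \<Longrightarrow> 0 \<noteq> real (Suc d) - real s" using dm by auto
qed

definition trunc_mat :: "nat \<Rightarrow> mat \<Rightarrow> mat" where
  "trunc_mat d Y = (\<lambda>i j. if i < d \<and> j < d then Y i j else 0)"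

definition extend_fun :: "nat \<Rightarrow> (mat \<Rightarrow> real) \<Rightarrow> (mat \<Rightarrow> real)" where
  "extend_fun d f = (\<lambda>X. if X \<in> sym_mats (Suc d)
      then (\<Sum>v<Suc d. f (trunc_mat d (perm_act (Transposition.transpose v d) X))) else 0)"

lemma trunc_mat_in_sym_mats: "(\<And>i j. Y i j = Y j i) \<Longrightarrow> trunc_mat d Y \<in> sym_mats d"
  by (auto simp: trunc_mat_def sym_mats_def)

lemma trunc_mat_perm_act:
  assumes "\<rho> permutes {..<d}"
  shows "trunc_mat d (perm_act \<rho> Y) = perm_act \<rho> (trunc_mat d Y)"
proof -
  have "\<And>x. \<rho> x < d \<longleftrightarrow> x < d" using permutes_in_image[OF assms] by simp
  then show ?thesis by (simp add: trunc_mat_def perm_act_def fun_eq_iff)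
qed

lemma module_hom_extend_fun: "module_hom fscale fscale (extend_fun d)"
  by (rule module_hom_fscaleI)
    (auto simp: extend_fun_def fun_eq_iff fscale_def sum.distrib sum_distrib_left
      simp del: sum.lessThan_Suc)

lemma monomial_fn_trunc_swap:
  assumes v: "v < Suc d" and X: "X \<in> sym_mats (Suc d)"
    and e0: "\<forall>p. p \<notin> {..<d} \<times> {..<d} \<longrightarrow> e p = 0"
  defines "t \<equiv> Transposition.transpose v d"
  shows "monomial_fn d e (trunc_mat d (perm_act t X))
    = monomial_fn (Suc d) (\<lambda>p. e (t (fst p), t (snd p))) X"
proof -
  have t: "t permutes {..<Suc d}" unfolding t_def using v by (intro permutes_swap_id) auto
  have sub: "{..<d} \<times> {..<d} \<subseteq> {..<Suc d} \<times> {..<Suc d}" by auto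
  have z: "\<forall>p\<in>{..<Suc d} \<times> {..<Suc d} - {..<d} \<times> {..<d}. e p = 0"
    using e0 by (meson DiffD2)
  define G where "G q = X (t (fst q)) (t (snd q)) ^ e q" for q
  have "(\<Prod>p\<in>{..<d} \<times> {..<d}. trunc_mat d (perm_act t X) (fst p) (snd p) ^ e p)
      = (\<Prod>p\<in>{..<d} \<times> {..<d}. G p)"
    by (rule prod.cong) (auto simp: trunc_mat_def perm_act_def G_def)
  also have "\<dots> = (\<Prod>p\<in>{..<Suc d} \<times> {..<Suc d}. G p)"
    by (rule prod.mono_neutral_left[OF _ sub]) (simp, use z in \<open>simp add: G_def\<close>)
  also have "\<dots> = (\<Prod>p\<in>{..<Suc d} \<times> {..<Suc d}. G (t (fst p), t (snd p)))"
    by (rule prod_square_permute[OF t, symmetric])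
  also have "\<dots> = (\<Prod>p\<in>{..<Suc d} \<times> {..<Suc d}. X (fst p) (snd p) ^ e (t (fst p), t (snd p)))"
    by (simp add: G_def t_def)
  finally show ?thesis
    using X trunc_mat_in_sym_mats[OF perm_act_symmetric[OF X]] by (simp add: monomial_fn_def)
qed

lemma extend_fun_monomial:
  assumes e0: "\<forall>p. p \<notin> {..<d} \<times> {..<d} \<longrightarrow> e p = 0"
    and es: "(\<Sum>p\<in>{..<d} \<times> {..<d}. e p) \<le> m"
  shows "extend_fun d (monomial_fn d e) \<in> fs.span (monomials_upto (Suc d) m)"
proof -
  have z: "\<forall>p\<in>{..<Suc d} \<times> {..<Suc d} - {..<d} \<times> {..<d}. e p = 0"
    using e0 by (meson DiffD2)
  define e' where "e' v = (\<lambda>p. e (Transposition.transpose v d (fst p), Transposition.transpose v d (snd p)))" for v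
  have mem: "monomial_fn (Suc d) (e' v) \<in> monomials_upto (Suc d) m" if v: "v < Suc d" for v
  proof -
    let ?t = "Transposition.transpose v d"
    have t: "?t permutes {..<Suc d}" using v by (intro permutes_swap_id) auto
    have t_less: "?t x < Suc d \<longleftrightarrow> x < Suc d" for x using permutes_in_image[OF t] by simp
    have supp: "\<forall>p. p \<notin> {..<Suc d} \<times> {..<Suc d} \<longrightarrow> e' v p = 0"
    proof (intro allI impI)
      fix p assume "p \<notin> {..<Suc d} \<times> {..<Suc d}"
      then have "(?t (fst p), ?t (snd p)) \<notin> {..<d} \<times> {..<d}" 
        using t_less[of "fst p"] t_less[of "snd p"] by (auto simp: mem_Times_iff)
      then show "e' v p = 0" using e0 by (simp add: e'_def)
    qed
    have "(\<Sum>p\<in>{..<Suc d} \<times> {..<Suc d}. e' v p) = (\<Sum>p\<in>{..<Suc d} \<times> {..<Suc d}. e p)"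
      unfolding e'_def by (rule sum_square_permute[OF t])
    also have "\<dots> = (\<Sum>p\<in>{..<d} \<times> {..<d}. e p)"
      by (rule sum.mono_neutral_right[OF _ _ z]) auto
    finally show ?thesis using supp es unfolding monomials_upto_def by auto
  qed
  have "extend_fun d (monomial_fn d e) = (\<Sum>v<Suc d. monomial_fn (Suc d) (e' v))"
  proof (rule ext)
    fix X
    show "extend_fun d (monomial_fn d e) X = (\<Sum>v<Suc d. monomial_fn (Suc d) (e' v)) X"
    proof (cases "X \<in> sym_mats (Suc d)")
      case True
      then show ?thesis
        unfolding extend_fun_def sum_fun_apply e'_def
        using monomial_fn_trunc_swap[OF _ True e0] by (simp del: sum.lessThan_Suc)
    qed (simp add: extend_fun_def sum_fun_apply monomial_fn_def)
  qed
  then show ?thesis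
    by (simp del: sum.lessThan_Suc) (rule fs.span_sum, use mem in \<open>auto intro: fs.span_base\<close>)
qed

text \<open>Conjugating \<open>\<sigma>\<close> by the swaps moving \<open>v\<close> and \<open>\<sigma> v\<close> to the last position gives a
  permutation fixing the last index.\<close>

lemma trunc_swap_perm_act:
  assumes \<sigma>: "\<sigma> permutes {..<Suc d}" and v: "v < Suc d"
  obtains \<rho> where "\<rho> permutes {..<d}"
    and "trunc_mat d (perm_act (Transposition.transpose v d) (perm_act \<sigma> X))
      = perm_act \<rho> (trunc_mat d (perm_act (Transposition.transpose (\<sigma> v) d) X))"
proof
  define \<rho> where "\<rho> = Transposition.transpose (\<sigma> v) d \<circ> \<sigma> \<circ> Transposition.transpose v d"
  have "\<sigma> v < Suc d" using permutes_in_image[OF \<sigma>, of v] v by simp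
  then have \<rho>_Suc: "\<rho> permutes {..<Suc d}" unfolding \<rho>_def
    by (intro permutes_compose permutes_swap_id \<sigma>) (use v in auto)
  have \<rho>_d: "\<rho> d = d" by (simp add: \<rho>_def)
  show \<rho>: "\<rho> permutes {..<d}"
    by (rule permutes_superset[OF \<rho>_Suc]) (use \<rho>_d in \<open>auto simp: less_Suc_eq\<close>)
  have "\<sigma> \<circ> Transposition.transpose v d = Transposition.transpose (\<sigma> v) d \<circ> \<rho>"
    by (simp add: \<rho>_def fun_eq_iff)
  then have "perm_act (Transposition.transpose v d) (perm_act \<sigma> X)
      = perm_act \<rho> (perm_act (Transposition.transpose (\<sigma> v) d) X)"
    by (metis perm_act_comp)
  then show "trunc_mat d (perm_act (Transposition.transpose v d) (perm_act \<sigma> X))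
      = perm_act \<rho> (trunc_mat d (perm_act (Transposition.transpose (\<sigma> v) d) X))"
    by (simp add: trunc_mat_perm_act[OF \<rho>])
qed

lemma extend_fun_in_inv_poly_upto:
  assumes q: "q \<in> inv_poly_upto d m"
  shows "extend_fun d q \<in> inv_poly_upto (Suc d) m"
proof (rule inv_poly_uptoI)
  have "extend_fun d ` monomials_upto d m \<subseteq> fs.span (monomials_upto (Suc d) m)"
    using extend_fun_monomial unfolding monomials_upto_def by blast
  then show "extend_fun d q \<in> fs.span (monomials_upto (Suc d) m)"
    using fs.image_span_subset[OF module_hom_extend_fun] q inv_poly_upto_subset_span by blast
next
  fix \<sigma> X assume \<sigma>: "\<sigma> permutes {..<Suc d}" and X: "X \<in> sym_mats (Suc d)"
  let ?term = "\<lambda>v. q (trunc_mat d (perm_act (Transposition.transpose v d) X))"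
  have "q (trunc_mat d (perm_act (Transposition.transpose v d) (perm_act \<sigma> X))) = ?term (\<sigma> v)"
    if v: "v < Suc d" for v
  proof -
    obtain \<rho> where \<rho>: "\<rho> permutes {..<d}"
      and eq: "trunc_mat d (perm_act (Transposition.transpose v d) (perm_act \<sigma> X))
        = perm_act \<rho> (trunc_mat d (perm_act (Transposition.transpose (\<sigma> v) d) X))"
      using trunc_swap_perm_act[OF \<sigma> v] .
    show ?thesis unfolding eq
      by (rule inv_poly_upto_invariant[OF q \<rho> trunc_mat_in_sym_mats[OF perm_act_symmetric[OF X]]])
  qed
  then have "extend_fun d q (perm_act \<sigma> X) = (\<Sum>v<Suc d. ?term (\<sigma> v))"
    using perm_act_in_sym_mats[OF \<sigma> X] by (simp add: extend_fun_def del: sum.lessThan_Suc)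
  also have "\<dots> = (\<Sum>v<Suc d. ?term v)"
    using sum.reindex_bij_betw[OF permutes_imp_bij[OF \<sigma>], of ?term] by simp
  also have "\<dots> = extend_fun d q X" using X by (simp add: extend_fun_def del: sum.lessThan_Suc)
  finally show "extend_fun d q (perm_act \<sigma> X) = extend_fun d q X" .
qed

lemma restrict_extend_fun:
  assumes q: "q \<in> fs.span (monomials_upto d m)"
  shows "restrict_fun d (extend_fun d q) = q + deletion_sum d q"
proof (rule ext)
  fix X
  show "restrict_fun d (extend_fun d q) X = (q + deletion_sum d q) X"
  proof (cases "X \<in> sym_mats d")
    case True
    have X0: "\<And>i j. d \<le> i \<or> d \<le> j \<Longrightarrow> X i j = 0" using True by (auto simp: sym_mats_def)
    have "trunc_mat d (perm_act (Transposition.transpose d d) X) = X"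
      using X0 by (auto simp: trunc_mat_def perm_act_def fun_eq_iff)
    moreover have "trunc_mat d (perm_act (Transposition.transpose v d) X) = del_rowcol v X"
      if "v < d" for v
      using that X0 by (auto simp: trunc_mat_def perm_act_def del_rowcol_def transpose_def fun_eq_iff)
    moreover have "X \<in> sym_mats (Suc d)" using True sym_mats_mono[of d "Suc d"] by auto
    ultimately show ?thesis
      using True by (simp add: restrict_fun_def extend_fun_def deletion_sum_def)
  qed (simp add: restrict_fun_def deletion_sum_def span_monomials_vanish[OF q])
qed

lemma extend_fun_eq_0_imp:
  assumes q: "q \<in> fs.span (monomials_upto d m)" and E: "extend_fun d q = 0"
  shows "q = 0"
proof (rule deletion_sum_eigenvector_eq_0[OF q])
  have "restrict_fun d (extend_fun d q) = 0" using E by (simp add: restrict_fun_def fun_eq_iff)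
  then have "q + deletion_sum d q = 0" using restrict_extend_fun[OF q] by simp
  then show "deletion_sum d q = fscale (-1) q"
    by (simp add: fun_eq_iff fscale_apply add_eq_0_iff)
  show "\<And>s. s \<le> min d (2 * m) \<Longrightarrow> -1 \<noteq> real d - real s" by auto
qed

lemma inv_dim_Suc:
  assumes "2 * m \<le> d"
  shows "inv_dim (Suc d) m = inv_dim d m"
  unfolding inv_dim_def
proof (rule antisym)
  have "inj_on (restrict_fun d) (inv_poly_upto (Suc d) m)"
    using module_hom.inj_on_iff_eq_0[OF module_hom_restrict_fun subspace_inv_poly_upto]
      restrict_fun_eq_0_imp[OF assms] by blast
  then show "fs.dim (inv_poly_upto (Suc d) m) \<le> fs.dim (inv_poly_upto d m)"
    by (rule fs.dim_le_dim_if_inj_on[OF module_hom_restrict_fun subspace_inv_poly_upto _ _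
          inv_poly_upto_subset_span finite_monomials_upto])
      (use restrict_fun_in_inv_poly_upto in blast)
next
  have "inj_on (extend_fun d) (inv_poly_upto d m)"
    using module_hom.inj_on_iff_eq_0[OF module_hom_extend_fun subspace_inv_poly_upto]
      extend_fun_eq_0_imp inv_poly_upto_subset_span by blast
  then show "fs.dim (inv_poly_upto d m) \<le> fs.dim (inv_poly_upto (Suc d) m)"
    by (rule fs.dim_le_dim_if_inj_on[OF module_hom_extend_fun subspace_inv_poly_upto _ _
          inv_poly_upto_subset_span finite_monomials_upto])
      (use extend_fun_in_inv_poly_upto in blast)
qed

lemma inv_dim_eq_inv_dim_2m:
  assumes "2 * m \<le> d"
  shows "inv_dim d m = inv_dim (2 * m) m"
  using assms
proof (induction d rule: nat_induct_at_least)
  case (Suc d)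
  then show ?case using inv_dim_Suc[of m d] by simp
qed simp

definition reynolds :: "nat \<Rightarrow> (mat \<Rightarrow> real) \<Rightarrow> (mat \<Rightarrow> real)" where
  "reynolds n f = (\<lambda>X. if X \<in> sym_mats n
      then (\<Sum>\<sigma>\<in>{\<sigma>. \<sigma> permutes {..<n}}. f (perm_act \<sigma> X)) else 0)"

lemma module_hom_reynolds: "module_hom fscale fscale (reynolds n)"
  by (rule module_hom_fscaleI)
    (auto simp: reynolds_def fun_eq_iff fscale_def sum.distrib sum_distrib_left)

lemma reynolds_inv_poly:
  assumes p: "p \<in> inv_poly_upto n m"
  shows "reynolds n p = fscale (fact n) p"
proof (rule ext)
  fix X
  have "card {\<sigma>. \<sigma> permutes {..<n}} = fact n" by (rule card_permutations) auto
  then show "reynolds n p X = fscale (fact n) p X"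
    using inv_poly_upto_invariant[OF p]
      span_monomials_vanish[of p n m X] inv_poly_upto_subset_span[of n m] p
    by (auto simp: reynolds_def fscale_apply)
qed

lemma inv_poly_upto_subset_span_reynolds:
  "inv_poly_upto n m \<subseteq> fs.span (reynolds n ` monomials_upto n m)"
proof
  fix p assume p: "p \<in> inv_poly_upto n m"
  have "reynolds n p \<in> fs.span (reynolds n ` monomials_upto n m)"
    by (rule fs.image_span_subset[OF module_hom_reynolds fs.span_superset])
      (use p inv_poly_upto_subset_span in blast)
  then have "fscale (1 / fact n) (reynolds n p) \<in> fs.span (reynolds n ` monomials_upto n m)"
    by (rule fs.span_scale)
  then show "p \<in> fs.span (reynolds n ` monomials_upto n m)"
    by (simp add: reynolds_inv_poly[OF p] fun_eq_iff fscale_apply)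
qed

lemma reynolds_monomial_permute:
  assumes \<pi>: "\<pi> permutes {..<n}"
  shows "reynolds n (monomial_fn n (\<lambda>p. e (\<pi> (fst p), \<pi> (snd p)))) = reynolds n (monomial_fn n e)"
proof (rule ext)
  fix X
  show "reynolds n (monomial_fn n (\<lambda>p. e (\<pi> (fst p), \<pi> (snd p)))) X = reynolds n (monomial_fn n e) X"
  proof (cases "X \<in> sym_mats n")
    case True
    have "monomial_fn n (\<lambda>p. e (\<pi> (fst p), \<pi> (snd p))) (perm_act \<sigma> X)
        = monomial_fn n e (perm_act (\<sigma> \<circ> inv \<pi>) X)" if \<sigma>: "\<sigma> permutes {..<n}" for \<sigma>
    proof -
      define G where "G q = X (\<sigma> (inv \<pi> (fst q))) (\<sigma> (inv \<pi> (snd q))) ^ e q" for q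
      have "(\<Prod>p\<in>{..<n} \<times> {..<n}. perm_act \<sigma> X (fst p) (snd p) ^ e (\<pi> (fst p), \<pi> (snd p)))
          = (\<Prod>p\<in>{..<n} \<times> {..<n}. G (\<pi> (fst p), \<pi> (snd p)))"
        by (simp add: G_def perm_act_def permutes_inverses[OF \<pi>])
      also have "\<dots> = (\<Prod>p\<in>{..<n} \<times> {..<n}. G p)"
        by (rule prod_square_permute[OF \<pi>])
      also have "\<dots> = (\<Prod>p\<in>{..<n} \<times> {..<n}. perm_act (\<sigma> \<circ> inv \<pi>) X (fst p) (snd p) ^ e p)"
        by (simp add: G_def perm_act_def)
      finally show ?thesis
        using perm_act_in_sym_mats[OF \<sigma> True]
          perm_act_in_sym_mats[OF permutes_compose[OF permutes_inv[OF \<pi>] \<sigma>] True]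
        by (simp add: monomial_fn_def)
    qed
    then have "reynolds n (monomial_fn n (\<lambda>p. e (\<pi> (fst p), \<pi> (snd p)))) X
        = (\<Sum>\<sigma>\<in>{\<sigma>. \<sigma> permutes {..<n}}. monomial_fn n e (perm_act (\<sigma> \<circ> inv \<pi>) X))"
      using True by (simp add: reynolds_def)
    also have "\<dots> = reynolds n (monomial_fn n e) X"
      using True sum_permutations_compose_right[OF permutes_inv[OF \<pi>],
          of "\<lambda>\<sigma>. monomial_fn n e (perm_act \<sigma> X)"]
      by (simp add: reynolds_def)
    finally show ?thesis .
  qed (simp add: reynolds_def)
qed

lemma bij_betw_swap_square: "bij_betw (\<lambda>p. (snd p, fst p)) ({..<n} \<times> {..<n}) ({..<n} \<times> {..<n})"
  by (rule bij_betw_byWitness[where f' = "\<lambda>p. (snd p, fst p)"]) auto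

text \<open>A symmetric multiplicity matrix \<open>M\<close> with even diagonal (the adjacency matrix of a
  multigraph, loops counted twice) encodes the monomial
  \<open>(\<Prod>i<j. X i j ^ M i j) * (\<Prod>i. X i i ^ (M i i div 2))\<close>.\<close>

definition multigraph_exponent :: "(nat \<Rightarrow> nat \<Rightarrow> nat) \<Rightarrow> nat \<times> nat \<Rightarrow> nat" where
  "multigraph_exponent M p = (if fst p < snd p then M (fst p) (snd p)
      else if fst p = snd p then M (fst p) (fst p) div 2 else 0)"

lemma monomial_fn_multigraph_exponent:
  "monomial_fn n (multigraph_exponent (\<lambda>a b. e (a,b) + e (b,a))) = monomial_fn n e"
proof (rule ext)
  fix X
  show "monomial_fn n (multigraph_exponent (\<lambda>a b. e (a,b) + e (b,a))) X = monomial_fn n e X"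
  proof (cases "X \<in> sym_mats n")
    case True
    define f where "f p = X (fst p) (snd p)" for p
    have f_swap: "f (snd p, fst p) = f p" for p using True by (simp add: f_def sym_mats_def)
    define U where "U p = (if fst p < snd p then e p else 0)" for p
    define L where "L p = (if snd p < fst p then e p else 0)" for p
    define D where "D p = (if fst p = snd p then e p else 0)" for p
    let ?P = "\<lambda>g. \<Prod>p\<in>{..<n} \<times> {..<n}. f p ^ g p"
    have e_split: "e p = U p + L p + D p" for p by (auto simp: U_def L_def D_def)
    have exp_split: "multigraph_exponent (\<lambda>a b. e (a,b) + e (b,a)) p = U p + L (snd p, fst p) + D p"
      for p by (cases p) (auto simp: U_def L_def D_def multigraph_exponent_def)
    \<comment> \<open>the lower triangle is moved to the upper one by the symmetry of \<open>X\<close>\<close>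
    have "?P (\<lambda>p. L (snd p, fst p))
        = (\<Prod>p\<in>{..<n} \<times> {..<n}. f (snd p, fst p) ^ L (snd p, fst p))"
      by (simp add: f_swap)
    also have "\<dots> = ?P L"
      using prod.reindex_bij_betw[OF bij_betw_swap_square, of "\<lambda>p. f p ^ L p"] by simp
    finally have swap: "?P (\<lambda>p. L (snd p, fst p)) = ?P L" .
    have "?P e = ?P U * ?P L * ?P D"
      by (simp add: e_split power_add prod.distrib)
    also have "\<dots> = ?P (multigraph_exponent (\<lambda>a b. e (a,b) + e (b,a)))"
      by (simp add: exp_split power_add prod.distrib swap)
    finally show ?thesis using True by (simp add: monomial_fn_def f_def)
  qed (simp add: monomial_fn_def)
qed

lemma exists_permutes_sorted:
  fixes g :: "nat \<Rightarrow> nat"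
  obtains \<pi> where "\<pi> permutes {..<n}" and "sorted_wrt (\<ge>) (map (\<lambda>k. g (\<pi> k)) [0..<n])"
proof -
  define xs where "xs = rev (sort_key g [0..<n])"
  have l: "length xs = n" by (simp add: xs_def)
  define \<pi> where "\<pi> k = (if k < n then xs ! k else k)" for k
  have "bij_betw ((!) xs) {..<n} {..<n}"
    by (rule bij_betw_nth) (auto simp: xs_def)
  then have "bij_betw \<pi> {..<n} {..<n}"
    by (rule bij_betw_cong[THEN iffD1, rotated]) (simp add: \<pi>_def)
  then have "\<pi> permutes {..<n}" by (rule bij_imp_permutes) (simp add: \<pi>_def)
  moreover have "map (\<lambda>k. g (\<pi> k)) [0..<n] = map g xs"
    by (rule nth_equalityI) (auto simp: \<pi>_def l)
  moreover have "sorted_wrt (\<ge>) (map g xs)"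
    by (simp add: xs_def rev_map[symmetric] sorted_wrt_rev)
  ultimately show ?thesis using that by auto
qed

definition sym_row_sum_mats :: "nat list \<Rightarrow> (nat \<Rightarrow> nat \<Rightarrow> nat) set" where
  "sym_row_sum_mats \<alpha> = {M :: nat \<Rightarrow> nat \<Rightarrow> nat.
      (\<forall>i j. M i j = M j i) \<and>
      (\<forall>i j. length \<alpha> \<le> i \<or> length \<alpha> \<le> j \<longrightarrow> M i j = 0) \<and>
      (\<forall>i < length \<alpha>. (\<Sum>j<length \<alpha>. M i j) = \<alpha> ! i)}"

lemma q_count_eq_card: "q_count \<alpha> = card (sym_row_sum_mats \<alpha>)"
  by (simp add: q_count_def sym_row_sum_mats_def)

lemma finite_sym_row_sum_mats: "finite (sym_row_sum_mats \<alpha>)"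
proof -
  define l where "l = length \<alpha>"
  define R where "R = {r :: nat \<Rightarrow> nat. \<forall>j. (j \<in> {..<l} \<longrightarrow> r j \<in> {..sum_list \<alpha>})
    \<and> (j \<notin> {..<l} \<longrightarrow> r j = 0)}"
  have "finite R" unfolding R_def by (rule finite_set_of_finite_funs) auto
  then have "finite {M. \<forall>i. (i \<in> {..<l} \<longrightarrow> M i \<in> R) \<and> (i \<notin> {..<l} \<longrightarrow> M i = (\<lambda>_. 0))}"
    by (intro finite_set_of_finite_funs) auto
  moreover have "sym_row_sum_mats \<alpha>
      \<subseteq> {M. \<forall>i. (i \<in> {..<l} \<longrightarrow> M i \<in> R) \<and> (i \<notin> {..<l} \<longrightarrow> M i = (\<lambda>_. 0))}"
  proof (intro subsetI CollectI allI conjI impI)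
    fix M i assume M: "M \<in> sym_row_sum_mats \<alpha>"
    then have zero: "\<forall>i j. l \<le> i \<or> l \<le> j \<longrightarrow> M i j = 0"
      and rows: "\<forall>i<l. (\<Sum>j<l. M i j) = \<alpha> ! i"
      by (auto simp: sym_row_sum_mats_def l_def)
    show "M i = (\<lambda>_. 0)" if "i \<notin> {..<l}" using that zero by auto
    assume i: "i \<in> {..<l}"
    have "M i j \<le> sum_list \<alpha>" if "j < l" for j
    proof -
      have "M i j \<le> (\<Sum>j<l. M i j)" using that by (intro member_le_sum) auto
      also have "\<dots> \<le> sum_list \<alpha>" using rows i by (auto simp: l_def intro: member_le_sum_list)
      finally show ?thesis .
    qed
    then show "M i \<in> R" using zero by (auto simp: R_def)
  qed
  ultimately show ?thesis by (rule finite_subset[rotated])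
qed

lemma finite_partitions_of: "finite (partitions_of k)"
proof -
  have "length xs \<le> sum_list xs" if "\<forall>x\<in>set xs. 0 < (x::nat)" for xs
    using that by (induction xs) auto
  then have "partitions_of k \<subseteq> {xs. set xs \<subseteq> {..k} \<and> length xs \<le> k}"
    by (auto simp: partitions_of_def dest: member_le_sum_list)
  moreover have "finite {xs. set xs \<subseteq> {..k::nat} \<and> length xs \<le> k}"
    by (rule finite_lists_length_le) simp
  ultimately show ?thesis by (rule finite_subset)
qed

lemma sorted_nth_after_takeWhile_pos:
  fixes xs :: "nat list"
  assumes sorted: "sorted_wrt (\<ge>) xs" and k: "length (takeWhile (\<lambda>x. 0 < x) xs) \<le> k" "k < length xs"
  shows "xs ! k = 0"
proof -
  let ?l = "length (takeWhile (\<lambda>x. 0 < x) xs)"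
  have "\<not> 0 < xs ! ?l" using k by (intro nth_length_takeWhile) simp
  moreover have "xs ! k \<le> xs ! ?l"
    using sorted_wrt_nth_less[OF sorted, of ?l k] k by (cases "k = ?l") auto
  ultimately show ?thesis by simp
qed

lemma sorted_row_sums_partition:
  fixes M :: "nat \<Rightarrow> nat \<Rightarrow> nat"
  assumes sym: "\<And>a b. M a b = M b a" and supp: "\<And>a b. n \<le> a \<Longrightarrow> M a b = 0"
    and sorted: "sorted_wrt (\<ge>) (map (\<lambda>k. \<Sum>b<n. M k b) [0..<n])"
  defines "\<alpha> \<equiv> takeWhile (\<lambda>x. 0 < x) (map (\<lambda>k. \<Sum>b<n. M k b) [0..<n])"
  shows "M \<in> sym_row_sum_mats \<alpha>" and "\<alpha> \<in> partitions_of (\<Sum>k<n. \<Sum>b<n. M k b)"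
proof -
  define row where "row = (\<lambda>k. \<Sum>b<n. M k b)"
  have \<alpha>_row: "\<alpha> = takeWhile (\<lambda>x. 0 < x) (map row [0..<n])" by (simp add: \<alpha>_def row_def)
  define l where "l = length \<alpha>"
  have "l \<le> length (map (\<lambda>k. \<Sum>b<n. M k b) [0..<n])"
    unfolding l_def \<alpha>_def by (rule length_takeWhile_le)
  then have l_le: "l \<le> n" by simp
  have \<alpha>_nth: "\<alpha> ! k = row k" if "k < l" for k
  proof -
    have "k < n" using that l_le by simp
    have "\<alpha> ! k = map (\<lambda>k. \<Sum>b<n. M k b) [0..<n] ! k"
      unfolding \<alpha>_def by (rule takeWhile_nth) (use that in \<open>simp add: l_def \<alpha>_def\<close>)
    then show ?thesis using \<open>k < n\<close> by (simp add: row_def)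
  qed
  have row_zero: "row k = 0" if "l \<le> k" for k
  proof (cases "k < n")
    case True
    have "map row [0..<n] ! k = 0"
      by (rule sorted_nth_after_takeWhile_pos) (use sorted \<open>l \<le> k\<close> True in
          \<open>simp_all add: l_def \<alpha>_row row_def\<close>)
    then show ?thesis using True by simp
  qed (simp add: row_def supp)
  have M_zero: "M k b = 0" if "l \<le> k" for k b
  proof (cases "b < n")
    case True
    then have "M k b \<le> row k" unfolding row_def by (intro member_le_sum) auto
    then show ?thesis using row_zero[OF that] by simp
  qed (use sym supp in auto)
  have row_l: "(\<Sum>j<l. M i j) = row i" for i
    unfolding row_def by (rule sum.mono_neutral_left) (use l_le M_zero sym in auto)
  show "M \<in> sym_row_sum_mats \<alpha>"
    unfolding sym_row_sum_mats_def l_def[symmetric]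
  proof (intro CollectI conjI allI impI)
    fix i j show "M i j = M j i" by (rule sym)
  next
    fix i j assume "l \<le> i \<or> l \<le> j"
    then show "M i j = 0" by (metis M_zero sym)
  next
    fix i assume "i < l"
    then show "(\<Sum>j<l. M i j) = \<alpha> ! i" by (simp add: row_l \<alpha>_nth)
  qed
  have "sum_list \<alpha> = (\<Sum>k<l. row k)"
  proof -
    have "\<alpha> = map row [0..<l]"
      by (rule nth_equalityI) (auto simp: l_def \<alpha>_nth[unfolded l_def])
    then show ?thesis by (simp add: sum_list_sum_nth atLeast0LessThan)
  qed
  also have "\<dots> = (\<Sum>k<n. row k)"
    by (rule sum.mono_neutral_left) (use l_le row_zero in auto)
  finally show "\<alpha> \<in> partitions_of (\<Sum>k<n. \<Sum>b<n. M k b)"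
    unfolding partitions_of_def \<alpha>_def row_def
    using sorted_wrt_takeWhile[OF sorted] by (auto dest: set_takeWhileD)
qed

text \<open>Sorting the indices by vertex degree turns the multigraph of a monomial into one whose
  degree sequence is a partition.\<close>

lemma reynolds_monomial_multigraph:
  assumes e0: "\<forall>p. p \<notin> {..<n} \<times> {..<n} \<longrightarrow> e p = 0"
  obtains \<alpha> M where "\<alpha> \<in> partitions_of (2 * (\<Sum>p\<in>{..<n} \<times> {..<n}. e p))"
    and "M \<in> sym_row_sum_mats \<alpha>"
    and "reynolds n (monomial_fn n e) = reynolds n (monomial_fn n (multigraph_exponent M))"
proof -
  define deg where "deg a = (\<Sum>b<n. e (a,b) + e (b,a))" for a
  obtain \<pi> where \<pi>: "\<pi> permutes {..<n}" and sorted: "sorted_wrt (\<ge>) (map (\<lambda>k. deg (\<pi> k)) [0..<n])"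
    by (rule exists_permutes_sorted)
  define e' where "e' = (\<lambda>p. e (\<pi> (fst p), \<pi> (snd p)))"
  define M where "M = (\<lambda>a b. e' (a,b) + e' (b,a))"
  have "\<pi> a < n \<longleftrightarrow> a < n" for a using permutes_in_image[OF \<pi>] by simp
  then have supp: "M a b = 0" if "n \<le> a" for a b
    using that e0 by (auto simp: M_def e'_def)
  have row: "(\<Sum>b<n. M k b) = deg (\<pi> k)" for k
    using sum.reindex_bij_betw[OF permutes_imp_bij[OF \<pi>], of "\<lambda>b. e (\<pi> k, b) + e (b, \<pi> k)"]
    by (simp add: M_def e'_def deg_def)
  have "sorted_wrt (\<ge>) (map (\<lambda>k. \<Sum>b<n. M k b) [0..<n])" using sorted by (simp add: row)
  note partition = sorted_row_sums_partition[of M n, OF _ supp this]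
  have "(\<Sum>k<n. \<Sum>b<n. M k b) = (\<Sum>k<n. \<Sum>b<n. e' (k,b)) + (\<Sum>k<n. \<Sum>b<n. e' (b,k))"
    by (simp add: M_def sum.distrib)
  also have "(\<Sum>k<n. \<Sum>b<n. e' (b,k)) = (\<Sum>k<n. \<Sum>b<n. e' (k,b))"
    by (rule sum.swap)
  also have "(\<Sum>k<n. \<Sum>b<n. e' (k,b)) = (\<Sum>p\<in>{..<n} \<times> {..<n}. e p)"
    unfolding e'_def sum.cartesian_product by (simp add: split_def sum_square_permute[OF \<pi>])
  finally have deg_sum: "(\<Sum>k<n. \<Sum>b<n. M k b) = 2 * (\<Sum>p\<in>{..<n} \<times> {..<n}. e p)"
    by simp
  moreover have "reynolds n (monomial_fn n e) = reynolds n (monomial_fn n (multigraph_exponent M))"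
    unfolding M_def monomial_fn_multigraph_exponent unfolding e'_def by (rule reynolds_monomial_permute[OF \<pi>, symmetric])
  ultimately show ?thesis using that partition deg_sum by (auto simp: M_def)
qed

lemma inv_dim_le_sum_q_count:
  "inv_dim n m \<le> (\<Sum>j\<le>m. \<Sum>\<alpha>\<in>partitions_of (2 * j). q_count \<alpha>)"
proof -
  define T where "T = (\<Union>j\<le>m. \<Union>\<alpha>\<in>partitions_of (2 * j). Pair \<alpha> ` sym_row_sum_mats \<alpha>)"
  define G where "G x = reynolds n (monomial_fn n (multigraph_exponent (snd x)))"
    for x :: "nat list \<times> (nat \<Rightarrow> nat \<Rightarrow> nat)"
  have fin_T: "finite T" unfolding T_def
    by (intro finite_UN_I finite_imageI finite_partitions_of finite_sym_row_sum_mats finite_atMost)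
  have "reynolds n ` monomials_upto n m \<subseteq> G ` T"
  proof
    fix y assume "y \<in> reynolds n ` monomials_upto n m"
    then obtain e where y: "y = reynolds n (monomial_fn n e)"
      and e0: "\<forall>p. p \<notin> {..<n} \<times> {..<n} \<longrightarrow> e p = 0" and es: "(\<Sum>p\<in>{..<n} \<times> {..<n}. e p) \<le> m"
      unfolding monomials_upto_def by blast
    obtain \<alpha> M where "\<alpha> \<in> partitions_of (2 * (\<Sum>p\<in>{..<n} \<times> {..<n}. e p))"
      and "M \<in> sym_row_sum_mats \<alpha>"
      and "reynolds n (monomial_fn n e) = reynolds n (monomial_fn n (multigraph_exponent M))"
      by (rule reynolds_monomial_multigraph[OF e0])
    then have "(\<alpha>, M) \<in> T" and "y = G (\<alpha>, M)" using es y by (auto simp: T_def G_def)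
    then show "y \<in> G ` T" by blast
  qed
  then have "inv_poly_upto n m \<subseteq> fs.span (G ` T)"
    using inv_poly_upto_subset_span_reynolds fs.span_mono by blast
  then have "inv_dim n m \<le> card (G ` T)"
    unfolding inv_dim_def by (rule fs.dim_le_card) (simp add: fin_T)
  also have "\<dots> \<le> card T" by (rule card_image_le[OF fin_T])
  also have "\<dots> \<le> (\<Sum>j\<le>m. \<Sum>\<alpha>\<in>partitions_of (2 * j). card (Pair \<alpha> ` sym_row_sum_mats \<alpha>))"
    unfolding T_def
    by (rule order_trans[OF card_UN_le sum_mono]) (auto intro: card_UN_le finite_partitions_of)
  also have "\<dots> = (\<Sum>j\<le>m. \<Sum>\<alpha>\<in>partitions_of (2 * j). q_count \<alpha>)"
    by (simp add: q_count_eq_card card_image inj_on_def)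
  finally show ?thesis .
qed

theorem mainTheorem7:
  fixes m :: nat
  shows "\<exists>N. (\<forall>d. 2 * m \<le> d \<longrightarrow> inv_dim d m = N) \<and>
             N \<le> (\<Sum>j\<le>m. \<Sum>\<alpha>\<in>partitions_of (2 * j). q_count \<alpha>)"
  using inv_dim_eq_inv_dim_2m inv_dim_le_sum_q_count by blast

end
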